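(* Let $\bar f\colon\mathbb{R}^d\to\mathbb{R}^d$ be globally Lipschitz and consider the mean flow $\frac{d}{dt}\vartheta_t=\bar f(\vartheta_t)$. (a) If (V4) holds, then (V4') holds. (b) If the limit $\bar f_\infty(\theta)=\lim_{r\to\infty}r^{-1}\bar f(r\theta)$ exists for every $\theta\in\mathbb{R}^d$ and the origin is asymptotically stable for the ODE@$\infty$, $\frac{d}{dt}\vartheta^\infty_t=\bar f_\infty(\vartheta^\infty_t)$, then (V4') holds.
   Context: (V4): there exist a $C^1$ function $V\colon\mathbb{R}^d\to[1,\infty)$ and a constant $\delta_0>0$ such that every solution of the mean flow satisfies $\frac{d}{d\tau}V(\vartheta_\tau)\le-\delta_0V(\vartheta_\tau)$ at every time $\tau\ge0$ with $\|\vartheta_\tau\|\ge\delta_0^{-1}$; moreover there is $L_V<\infty$ with $|V(\theta')-V(\theta)|\le L_V\|\theta'-\theta\|$ for all $\theta,\theta'$, and $V(\theta)\ge\|\theta\|$ when $\|\theta\|\ge\delta_0^{-1}$. (V4'): there exist a function $V\colon\mathbb{R}^d\to\mathbb{R}_+$ and constants $L_V<\infty$, $\delta_0,\delta_1,T>0$ such that $|V(\theta')-V(\theta)|\le L_V\|\theta'-\theta\|$ for all $\theta,\theta'$, $V(\theta)\ge\|\theta\|$ when $\|\theta\|\ge\delta_0^{-1}$, and every solution of the mean flow satisfies $V(\vartheta_{\tau+T})-V(\vartheta_\tau)\le-\delta_1\|\vartheta_\tau\|$ for all $\tau\ge0$ with $\|\vartheta_\tau\|>\delta_1^{-1}$.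 *)

theory Defs
  imports "HOL-Analysis.Analysis"
begin

definition ode_sol :: "('a::euclidean_space \<Rightarrow> 'a) \<Rightarrow> (real \<Rightarrow> 'a) \<Rightarrow> bool" where
  "ode_sol g x \<longleftrightarrow> (\<forall>t\<ge>0. (x has_vector_derivative g (x t)) (at t within {0..}))"

definition C1_fun :: "('a::euclidean_space \<Rightarrow> real) \<Rightarrow> bool" where
  "C1_fun V \<longleftrightarrow> (\<exists>V' :: 'a \<Rightarrow> 'a \<Rightarrow>\<^sub>L real.
      (\<forall>x. (V has_derivative blinfun_apply (V' x)) (at x)) \<and> continuous_on UNIV V')"

definition V4 :: "('a::euclidean_space \<Rightarrow> 'a) \<Rightarrow> bool" where
  "V4 fbar \<longleftrightarrow> (\<exists>(V :: 'a \<Rightarrow> real) \<delta>0 LV.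
      C1_fun V \<and> (\<forall>\<theta>. V \<theta> \<ge> 1) \<and> \<delta>0 > 0 \<and>
      (\<forall>x. ode_sol fbar x \<longrightarrow>
         (\<forall>\<tau>\<ge>0. norm (x \<tau>) \<ge> 1 / \<delta>0 \<longrightarrow>
            (\<forall>D. ((\<lambda>t. V (x t)) has_real_derivative D) (at \<tau> within {0..}) \<longrightarrow>
                 D \<le> - \<delta>0 * V (x \<tau>)))) \<and>
      (\<forall>\<theta> \<theta>'. \<bar>V \<theta>' - V \<theta>\<bar> \<le> LV * norm (\<theta>' - \<theta>)) \<and>
      (\<forall>\<theta>. norm \<theta> \<ge> 1 / \<delta>0 \<longrightarrow> V \<theta> \<ge> norm \<theta>))"

definition V4' :: "('a::euclidean_space \<Rightarrow> 'a) \<Rightarrow> bool" where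
  "V4' fbar \<longleftrightarrow> (\<exists>(V :: 'a \<Rightarrow> real) LV \<delta>0 \<delta>1 T.
      (\<forall>\<theta>. V \<theta> \<ge> 0) \<and> \<delta>0 > 0 \<and> \<delta>1 > 0 \<and> T > 0 \<and>
      (\<forall>\<theta> \<theta>'. \<bar>V \<theta>' - V \<theta>\<bar> \<le> LV * norm (\<theta>' - \<theta>)) \<and>
      (\<forall>\<theta>. norm \<theta> \<ge> 1 / \<delta>0 \<longrightarrow> V \<theta> \<ge> norm \<theta>) \<and>
      (\<forall>x. ode_sol fbar x \<longrightarrow>
         (\<forall>\<tau>\<ge>0. norm (x \<tau>) > 1 / \<delta>1 \<longrightarrow>
            V (x (\<tau> + T)) - V (x \<tau>) \<le> - \<delta>1 * norm (x \<tau>))))"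

definition origin_asymp_stable :: "('a::euclidean_space \<Rightarrow> 'a) \<Rightarrow> bool" where
  "origin_asymp_stable g \<longleftrightarrow>
     (\<forall>\<epsilon>>0. \<exists>\<delta>>0. \<forall>x. ode_sol g x \<and> norm (x 0) < \<delta> \<longrightarrow> (\<forall>t\<ge>0. norm (x t) < \<epsilon>)) \<and>
     (\<exists>\<delta>>0. \<forall>x. ode_sol g x \<and> norm (x 0) < \<delta> \<longrightarrow> (x \<longlongrightarrow> 0) at_top)"

definition f_infty :: "('a::euclidean_space \<Rightarrow> 'a) \<Rightarrow> 'a \<Rightarrow> 'a" where
  "f_infty fbar \<theta> = Lim at_top (\<lambda>r. (1 / r) *\<^sub>R fbar (r *\<^sub>R \<theta>))"

end

(*
  (a) Along the mean flow, exp(\<delta>0 t) V(\<vartheta>_t) is nonincreasing while the trajectory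
  stays outside the ball of radius 1/\<delta>0.  Over a unit time interval either the trajectory
  never enters that ball, and V shrinks by the factor exp(-\<delta>0), or V at the end is at most
  its value at the last visit, hence at most its maximum C over the ball.  When \<parallel>\<vartheta>_\<tau>\<parallel> is large,
  V(\<vartheta>_\<tau>) \<ge> \<parallel>\<vartheta>_\<tau>\<parallel>, so both cases give a decrease proportional to
  \<parallel>\<vartheta>_\<tau>\<parallel>.

  (b) The limit field fbar_\<infinity> inherits the Lipschitz constant of fbar and is positively
  homogeneous, so local attractivity of the origin is global, and by compactness of the unit
  ball and continuous dependence on initial values it is uniform: there is a T such that
  every solution of the ODE@\<infinity> starting in the unit ball lies in the ball of radius 1/4
  after time T.  A trajectory of the mean flow rescaled by r = \<parallel>\<vartheta>_\<tau>\<parallel> solves the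
  ODE with field fbar(r \<theta>)/r, which converges to fbar_\<infinity> uniformly on bounded sets; a
  Gronwall estimate then gives \<parallel>\<vartheta>_{\<tau>+T}\<parallel> \<le> \<parallel>\<vartheta>_\<tau>\<parallel>/2 for large r, so (V4')
  holds with V = \<parallel>\<cdot>\<parallel>.  The solutions from arbitrary initial values used in (b) exist by
  Picard iteration, since both fields are globally Lipschitz.
*)
theory Submission
  imports Defs
begin

section \<open>A strict Gronwall inequality\<close>

lemma has_vector_derivative_at_left_quotient:
  fixes d :: "real \<Rightarrow> 'a::real_normed_vector"
  assumes "(d has_vector_derivative D) (at_left t)"
  shows "((\<lambda>s. (d t - d s) /\<^sub>R (t - s)) \<longlongrightarrow> D) (at_left t)"
proof -
  have lim: "((\<lambda>s. norm (d s - d t - (s - t) *\<^sub>R D) / norm (s - t)) \<longlongrightarrow> 0) (at_left t)"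
    using assms unfolding has_vector_derivative_def has_derivative_iff_norm by blast
  have eq: "eventually (\<lambda>s. norm (d s - d t - (s - t) *\<^sub>R D) / norm (s - t)
      = norm ((d t - d s) /\<^sub>R (t - s) - D)) (at_left t)"
  proof (rule eventually_at_leftI[of "t - 1"])
    fix s assume "s \<in> {t - 1<..<t}"
    then have "t - s > 0" by simp
    then have "(d t - d s) /\<^sub>R (t - s) - D = (1 / (t - s)) *\<^sub>R (d t - d s - (t - s) *\<^sub>R D)"
      by (simp add: scaleR_diff_right divide_inverse)
    also have "d t - d s - (t - s) *\<^sub>R D = - (d s - d t - (s - t) *\<^sub>R D)"
      by (simp add: algebra_simps)
    finally have "norm ((d t - d s) /\<^sub>R (t - s) - D) = norm (d s - d t - (s - t) *\<^sub>R D) / (t - s)"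
      using \<open>t - s > 0\<close> by (simp only: norm_scaleR norm_minus_cancel) simp
    then show "norm (d s - d t - (s - t) *\<^sub>R D) / norm (s - t) = norm ((d t - d s) /\<^sub>R (t - s) - D)"
      using \<open>t - s > 0\<close> by simp
  qed simp
  have "((\<lambda>s. norm ((d t - d s) /\<^sub>R (t - s) - D)) \<longlongrightarrow> 0) (at_left t)"
    using lim tendsto_cong[OF eq] by blast
  then show ?thesis by (simp add: tendsto_norm_zero_iff LIM_zero_iff)
qed

lemma derivative_le_norm_derivative_at_contact:
  fixes d :: "real \<Rightarrow> 'a::real_normed_vector"
  assumes d: "(d has_vector_derivative D) (at_left t)"
    and \<phi>: "(\<phi> has_real_derivative \<phi>') (at_left t)"
    and below: "eventually (\<lambda>s. norm (d s) \<le> \<phi> s) (at_left t)"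
    and contact: "\<phi> t \<le> norm (d t)"
  shows "\<phi>' \<le> norm D"
proof (rule tendsto_le[OF trivial_limit_at_left_real])
  show "((\<lambda>s. norm ((d t - d s) /\<^sub>R (t - s))) \<longlongrightarrow> norm D) (at_left t)"
    by (intro tendsto_norm has_vector_derivative_at_left_quotient d)
  show "((\<lambda>s. (\<phi> s - \<phi> t) / (s - t)) \<longlongrightarrow> \<phi>') (at_left t)"
    using \<phi> by (simp add: has_field_derivative_iff)
  have "eventually (\<lambda>s. s < t) (at_left t)"
    by (simp add: eventually_at_filter)
  with below show "eventually (\<lambda>s. (\<phi> s - \<phi> t) / (s - t) \<le> norm ((d t - d s) /\<^sub>R (t - s))) (at_left t)"
  proof eventually_elim
    case (elim s)
    have "\<phi> t - \<phi> s \<le> norm (d t - d s)"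
      using elim(1) contact norm_triangle_ineq2[of "d t" "d s"] by linarith
    then have "(\<phi> t - \<phi> s) / (t - s) \<le> norm (d t - d s) / (t - s)"
      using elim(2) by (simp add: divide_right_mono)
    moreover have "(\<phi> s - \<phi> t) / (s - t) = (\<phi> t - \<phi> s) / (t - s)"
      by (metis minus_diff_eq minus_divide_divide)
    moreover have "norm ((d t - d s) /\<^sub>R (t - s)) = norm (d t - d s) / (t - s)"
      using elim(2) by (simp add: divide_inverse mult.commute)
    ultimately show ?case by simp
  qed
qed

lemma continuous_on_first_root:
  fixes g :: "real \<Rightarrow> real"
  assumes g: "continuous_on {a..b} g" and "0 < g a" "g b \<le> 0" "a \<le> b"
  shows "\<exists>t0\<in>{a<..b}. g t0 = 0 \<and> (\<forall>s\<in>{a..<t0}. 0 < g s)"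
proof -
  define S where "S = {s \<in> {a..b}. g s \<le> 0}"
  have "closed S"
    unfolding S_def by (intro continuous_on_closed_Collect_le g continuous_on_const) simp
  moreover have "b \<in> S" "bdd_below S"
    using assms by (auto simp: S_def intro: bdd_belowI[of _ a])
  ultimately have t0: "Inf S \<in> S"
    using closed_contains_Inf by blast
  have pos: "0 < g s" if "a \<le> s" "s < Inf S" for s
    using that cInf_lower[OF _ \<open>bdd_below S\<close>, of s] \<open>b \<in> S\<close> t0 by (force simp: S_def)
  have "Inf S \<noteq> a"
    using t0 \<open>0 < g a\<close> by (auto simp: S_def)
  then have "a < Inf S" "Inf S \<le> b"
    using t0 by (auto simp: S_def)
  moreover have "g (Inf S) = 0"
  proof (rule ccontr)
    assume "g (Inf S) \<noteq> 0"
    then have "g (Inf S) < 0"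
      using t0 by (simp add: S_def)
    moreover have "continuous_on {a..Inf S} g"
      using g \<open>Inf S \<le> b\<close> by (auto elim: continuous_on_subset)
    ultimately obtain s where "a \<le> s" "s \<le> Inf S" "g s = 0"
      using IVT2'[of g "Inf S" 0 a] \<open>0 < g a\<close> \<open>a < Inf S\<close> by auto
    then show False
      using pos[of s] \<open>g (Inf S) < 0\<close> by (cases "s = Inf S") auto
  qed
  ultimately show ?thesis
    using pos by auto
qed

lemma gronwall_norm_less_exp:
  fixes d :: "real \<Rightarrow> 'a::real_normed_vector"
  assumes der: "\<And>t. t \<in> {0..T} \<Longrightarrow> (d has_vector_derivative d' t) (at t within {0..T})"
    and bound: "\<And>t. t \<in> {0..T} \<Longrightarrow> norm (d' t) \<le> L * norm (d t) + \<eta>"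
    and d0: "norm (d 0) < c" and "0 \<le> L" "0 \<le> \<eta>" and K: "L + \<eta> / c < K"
    and t: "t \<in> {0..T}"
  shows "norm (d t) < c * exp (K * t)"
proof (rule ccontr)
  \<comment> \<open>At the first time \<open>t0\<close> where \<open>norm d\<close> reaches the barrier \<open>\<phi>\<close>, the barrier cannot grow
    faster than \<open>d\<close>: \<open>K \<phi> t0 \<le> L \<phi> t0 + \<eta>\<close>, which contradicts the choice of \<open>K\<close>.\<close>
  assume crossed: "\<not> ?thesis"
  define \<phi> where "\<phi> s = c * exp (K * s)" for s
  have "c > 0"
    using d0 norm_ge_zero[of "d 0"] by linarith
  have "continuous_on {0..T} d"
    unfolding continuous_on_eq_continuous_within using der has_vector_derivative_continuous by blast
  then have "continuous_on {0..t} (\<lambda>s. \<phi> s - norm (d s))"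
    unfolding \<phi>_def using t by (auto intro!: continuous_intros elim: continuous_on_subset)
  then obtain t0 where t0: "0 < t0" "t0 \<le> t" "norm (d t0) = \<phi> t0"
    and below: "\<And>s. 0 \<le> s \<Longrightarrow> s < t0 \<Longrightarrow> norm (d s) < \<phi> s"
    using continuous_on_first_root[of 0 t "\<lambda>s. \<phi> s - norm (d s)"] d0 crossed t
    by (fastforce simp: \<phi>_def)
  have "(d has_vector_derivative d' t0) (at t0 within {0..t0})"
    using der[of t0] t0 t by (auto elim: has_vector_derivative_within_subset)
  then have "(d has_vector_derivative d' t0) (at_left t0)"
    using at_within_Icc_at_left[OF \<open>0 < t0\<close>] by simp
  moreover have "(\<phi> has_real_derivative K * \<phi> t0) (at_left t0)"
    unfolding \<phi>_def by (auto intro!: derivative_eq_intros)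
  moreover have "eventually (\<lambda>s. norm (d s) \<le> \<phi> s) (at_left t0)"
    using below by (intro eventually_at_leftI[OF _ \<open>0 < t0\<close>]) (simp add: less_imp_le)
  ultimately have "K * \<phi> t0 \<le> norm (d' t0)"
    by (rule derivative_le_norm_derivative_at_contact) (simp add: t0(3))
  also have "\<dots> \<le> L * \<phi> t0 + \<eta>"
    using bound[of t0] t0 t by simp
  finally have "(K - L) * \<phi> t0 \<le> \<eta>"
    by (simp add: algebra_simps)
  moreover have "\<eta> < (K - L) * c"
    using K \<open>c > 0\<close> by (simp add: field_simps)
  moreover have "(K - L) * c \<le> (K - L) * \<phi> t0"
  proof (rule mult_left_mono)
    have "0 \<le> \<eta> / c"
      using \<open>0 \<le> \<eta>\<close> \<open>c > 0\<close> by simp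
    then show "0 \<le> K - L"
      using K by linarith
    then show "c \<le> \<phi> t0"
      using \<open>c > 0\<close> \<open>0 \<le> L\<close> t0 by (simp add: \<phi>_def)
  qed
  ultimately show False
    by linarith
qed

section \<open>Solutions of autonomous ODEs\<close>

lemma ode_sol_continuous_on:
  assumes "ode_sol g x"
  shows "continuous_on {0..} x"
  using assms unfolding ode_sol_def continuous_on_eq_continuous_within
  by (auto intro: has_vector_derivative_continuous)

lemma ode_sol_shift:
  assumes "ode_sol g x" "0 \<le> s"
  shows "ode_sol g (\<lambda>t. x (s + t))"
  unfolding ode_sol_def
proof (intro allI impI)
  fix t :: real assume "0 \<le> t"
  then have "(x has_vector_derivative g (x (s + t))) (at (s + t) within {0..})"
    using assms unfolding ode_sol_def by simp
  then have "(x has_vector_derivative g (x (s + t))) (at (s + t) within (+) s ` {0..})"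
    by (rule has_vector_derivative_within_subset) (use assms in auto)
  moreover have "((+) s has_vector_derivative 1) (at t within {0..})"
    by (auto intro!: derivative_eq_intros)
  ultimately show "((\<lambda>t. x (s + t)) has_vector_derivative g (x (s + t))) (at t within {0..})"
    using vector_diff_chain_within[of "(+) s" 1 t "{0..}" x] by (simp add: o_def)
qed

lemma ode_sol_scaleR:
  assumes "ode_sol g x" "c \<noteq> 0"
  shows "ode_sol (\<lambda>\<theta>. c *\<^sub>R g (\<theta> /\<^sub>R c)) (\<lambda>t. c *\<^sub>R x t)"
  using assms unfolding ode_sol_def by (auto intro!: derivative_eq_intros)

lemma ode_sol_rescaled:
  assumes "ode_sol f x" "0 \<le> \<tau>" "0 < r"
  shows "ode_sol (\<lambda>\<theta>. (1 / r) *\<^sub>R f (r *\<^sub>R \<theta>)) (\<lambda>t. (1 / r) *\<^sub>R x (\<tau> + t))"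
  using ode_sol_scaleR[OF ode_sol_shift[OF assms(1,2)], of "1 / r"] assms(3) by simp

lemma ode_sol_of_integral_equation:
  assumes g: "continuous_on UNIV g" and x: "\<And>b. continuous_on {0..b} x"
    and eq: "\<And>t. 0 \<le> t \<Longrightarrow> x t = x 0 + integral {0..t} (\<lambda>s. g (x s))"
  shows "ode_sol g x"
  unfolding ode_sol_def
proof (intro allI impI)
  fix t :: real assume "0 \<le> t"
  have "continuous_on {0..t + 1} (\<lambda>s. g (x s))"
    using continuous_on_compose2[OF g x] by auto
  then have "((\<lambda>u. x 0 + integral {0..u} (\<lambda>s. g (x s))) has_vector_derivative g (x t))
      (at t within {0..t + 1})"
    using integral_has_vector_derivative[of 0 "t + 1" _ t] \<open>0 \<le> t\<close>
    by (auto intro!: derivative_eq_intros)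
  moreover have "at t within {0..t + 1} = at t within {0..}"
    by (rule at_within_nhd[where S="{t - 1<..<t + 1}"]) auto
  ultimately have "((\<lambda>u. x 0 + integral {0..u} (\<lambda>s. g (x s))) has_vector_derivative g (x t))
      (at t within {0..})"
    by simp
  then show "(x has_vector_derivative g (x t)) (at t within {0..})"
  proof (rule has_vector_derivative_transform_within[OF _ zero_less_one])
    fix u :: real assume "u \<in> {0..}"
    then show "x 0 + integral {0..u} (\<lambda>s. g (x s)) = x u"
      using eq[of u] by simp
  qed (use \<open>0 \<le> t\<close> in simp)
qed

primrec picard :: "('a::banach \<Rightarrow> 'a) \<Rightarrow> 'a \<Rightarrow> nat \<Rightarrow> real \<Rightarrow> 'a" where
  "picard g \<theta> 0 = (\<lambda>t. \<theta>)"
| "picard g \<theta> (Suc n) = (\<lambda>t. \<theta> + integral {0..t} (\<lambda>s. g (picard g \<theta> n s)))"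

lemma continuous_on_picard:
  assumes "continuous_on UNIV g"
  shows "continuous_on {0..b} (picard g \<theta> n)"
proof (induction n arbitrary: b)
  case (Suc n)
  have "continuous_on {0..b} (\<lambda>s. g (picard g \<theta> n s))"
    using continuous_on_compose2[OF assms Suc.IH] by auto
  then show ?case
    by (auto intro!: continuous_intros indefinite_integral_continuous_1 integrable_continuous_real)
qed simp

lemma has_integral_power_div_fact:
  fixes t :: real
  assumes "0 \<le> t"
  shows "((\<lambda>s. s ^ n / fact n) has_integral t ^ Suc n / fact (Suc n)) {0..t}"
proof -
  have "((\<lambda>s. s ^ Suc n / fact (Suc n)) has_real_derivative s ^ n / fact n) (at s within {0..t})"
    for s :: real
    using DERIV_cdivide[OF DERIV_pow[of "Suc n" s], of "fact (Suc n)"]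
    by (simp del: fact_Suc add: fact_Suc[of n])
  then show ?thesis
    using fundamental_theorem_of_calculus[of 0 t "\<lambda>s. s ^ Suc n / fact (Suc n)"] assms
    by (simp add: has_real_derivative_iff_has_vector_derivative)
qed

lemma norm_picard_Suc_diff_le:
  assumes lip: "L-lipschitz_on UNIV g" and "0 \<le> t"
  shows "norm (picard g \<theta> (Suc n) t - picard g \<theta> n t)
    \<le> norm (g \<theta>) * L ^ n * (t ^ Suc n / fact (Suc n))"
  using \<open>0 \<le> t\<close>
proof (induction n arbitrary: t)
  case (Suc n)
  let ?p = "picard g \<theta>" and ?c = "norm (g \<theta>) * L ^ Suc n"
  have gcont: "continuous_on UNIV g"
    using lip by (rule lipschitz_on_continuous_on)
  have int: "(\<lambda>s. g (?p m s)) integrable_on {0..t}" for m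
    by (intro integrable_continuous_real continuous_on_compose2[OF gcont continuous_on_picard[OF gcont]])
      auto
  have B_int: "((\<lambda>s. ?c * (s ^ Suc n / fact (Suc n))) has_integral ?c * (t ^ Suc (Suc n) / fact (Suc (Suc n))))
      {0..t}"
    using has_integral_power_div_fact[OF Suc.prems] by (rule has_integral_mult_right)
  have "norm (?p (Suc (Suc n)) t - ?p (Suc n) t)
      = norm (integral {0..t} (\<lambda>s. g (?p (Suc n) s) - g (?p n s)))"
    using integral_diff[OF int[of "Suc n"] int[of n]] by simp
  also have "\<dots> \<le> integral {0..t} (\<lambda>s. ?c * (s ^ Suc n / fact (Suc n)))"
  proof (rule integral_norm_bound_integral)
    fix s assume "s \<in> {0..t}"
    then have "norm (g (?p (Suc n) s) - g (?p n s)) \<le> L * norm (?p (Suc n) s - ?p n s)"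
      using lipschitz_on_normD[OF lip] by blast
    also have "\<dots> \<le> L * (norm (g \<theta>) * L ^ n * (s ^ Suc n / fact (Suc n)))"
      using Suc.IH \<open>s \<in> {0..t}\<close> lipschitz_on_nonneg[OF lip] by (intro mult_left_mono) auto
    finally show "norm (g (?p (Suc n) s) - g (?p n s)) \<le> ?c * (s ^ Suc n / fact (Suc n))"
      by (simp add: mult_ac)
  qed (use integrable_diff[OF int[of "Suc n"] int[of n]] B_int in \<open>auto simp del: picard.simps\<close>)
  also have "\<dots> = ?c * (t ^ Suc (Suc n) / fact (Suc (Suc n)))"
    using B_int by (rule integral_unique)
  finally show ?case .
qed simp

lemma uniform_limit_picard:
  assumes lip: "L-lipschitz_on UNIV g"
  shows "uniform_limit {0..b} (picard g \<theta>) (\<lambda>t. lim (\<lambda>n. picard g \<theta> n t)) sequentially"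
proof -
  let ?p = "picard g \<theta>" and ?M = "norm (g \<theta>)"
  define M where "M i = ?M * L ^ i * \<bar>b\<bar> ^ Suc i / fact (Suc i)" for i
  have "0 \<le> L"
    using lip by (rule lipschitz_on_nonneg)
  have "summable (\<lambda>i. ?M * \<bar>b\<bar> * (inverse (fact i) * (L * \<bar>b\<bar>) ^ i))"
    by (intro summable_mult summable_exp)
  moreover have "norm (M i) \<le> ?M * \<bar>b\<bar> * (inverse (fact i) * (L * \<bar>b\<bar>) ^ i)" for i
  proof -
    have "M i \<le> ?M * L ^ i * \<bar>b\<bar> ^ Suc i / fact i"
      unfolding M_def using \<open>0 \<le> L\<close> by (intro divide_left_mono) (auto simp: fact_mono)
    then show ?thesis
      using \<open>0 \<le> L\<close> by (simp add: M_def field_simps power_mult_distrib)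
  qed
  ultimately have "summable M"
    by (rule summable_comparison_test'[where N=0])
  moreover have "norm (?p (Suc i) t - ?p i t) \<le> M i" if "t \<in> {0..b}" for i t
  proof -
    have "norm (?p (Suc i) t - ?p i t) \<le> ?M * L ^ i * (t ^ Suc i / fact (Suc i))"
      using that by (intro norm_picard_Suc_diff_le[OF lip]) simp
    also have "\<dots> \<le> M i"
      unfolding M_def times_divide_eq_right[symmetric] using that \<open>0 \<le> L\<close>
      by (intro divide_right_mono mult_left_mono power_mono) auto
    finally show ?thesis .
  qed
  ultimately have "uniform_limit {0..b} (\<lambda>n t. \<theta> + (\<Sum>i<n. ?p (Suc i) t - ?p i t))
      (\<lambda>t. \<theta> + (\<Sum>i. ?p (Suc i) t - ?p i t)) sequentially"
    by (intro uniform_limit_intros Weierstrass_m_test)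
  moreover have "\<theta> + (\<Sum>i<n. ?p (Suc i) t - ?p i t) = ?p n t" for n t
    using sum_lessThan_telescope[of "\<lambda>i. ?p i t" n] by (simp del: picard.simps(2))
  ultimately have "uniformly_convergent_on {0..b} ?p"
    by (auto intro: uniformly_convergentI)
  then show ?thesis
    by (simp add: uniformly_convergent_uniform_limit_iff)
qed

lemma picard_limit_integral_equation:
  fixes \<theta> :: "'a::banach"
  assumes lip: "L-lipschitz_on UNIV g" and "0 \<le> t"
  defines "X \<equiv> \<lambda>t. lim (\<lambda>n. picard g \<theta> n t)"
  shows "X t = \<theta> + integral {0..t} (\<lambda>s. g (X s))"
proof -
  have gcont: "continuous_on UNIV g"
    using lip by (rule lipschitz_on_continuous_on)
  have "uniform_limit {0..t} (\<lambda>n s. g (picard g \<theta> n s)) (\<lambda>s. g (X s)) sequentially"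
    unfolding X_def
    by (rule uniform_limit_compose_uniformly_continuous_on[OF uniform_limit_picard[OF lip]
          lipschitz_on_uniformly_continuous[OF lip]]) auto
  then obtain I J where I: "\<And>n. ((\<lambda>s. g (picard g \<theta> n s)) has_integral I n) {0..t}"
    and J: "((\<lambda>s. g (X s)) has_integral J) {0..t}" and "I \<longlonglongrightarrow> J"
    using uniform_limit_integral continuous_on_compose2[OF gcont continuous_on_picard[OF gcont]]
    by (metis subset_UNIV trivial_limit_sequentially)
  have "(\<lambda>n. picard g \<theta> n t) \<longlonglongrightarrow> X t"
    using tendsto_uniform_limitI[OF uniform_limit_picard[OF lip], of t t] \<open>0 \<le> t\<close>
    by (simp add: X_def)
  then have "(\<lambda>n. picard g \<theta> (Suc n) t) \<longlonglongrightarrow> X t"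
    by (rule LIMSEQ_Suc)
  moreover have "picard g \<theta> (Suc n) t = \<theta> + I n" for n
    using integral_unique[OF I[of n]] by simp
  ultimately have "(\<lambda>n. \<theta> + I n) \<longlonglongrightarrow> X t"
    by (simp only:)
  moreover have "(\<lambda>n. \<theta> + I n) \<longlonglongrightarrow> \<theta> + J"
    using \<open>I \<longlonglongrightarrow> J\<close> by (intro tendsto_intros)
  ultimately show ?thesis
    using integral_unique[OF J] LIMSEQ_unique by metis
qed

lemma lipschitz_ode_sol_exists:
  assumes lip: "L-lipschitz_on UNIV g"
  shows "\<exists>x. x 0 = \<theta> \<and> ode_sol g x"
proof (intro exI conjI)
  define X where "X t = lim (\<lambda>n. picard g \<theta> n t)" for t
  have eq: "X t = \<theta> + integral {0..t} (\<lambda>s. g (X s))" if "0 \<le> t" for t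
    unfolding X_def using picard_limit_integral_equation[OF lip that] .
  then show "X 0 = \<theta>"
    by simp
  have "continuous_on {0..b} X" for b
    unfolding X_def
    by (rule uniform_limit_theorem[OF always_eventually uniform_limit_picard[OF lip]])
      (auto intro: continuous_on_picard lipschitz_on_continuous_on[OF lip])
  then show "ode_sol g X"
    by (rule ode_sol_of_integral_equation[OF lipschitz_on_continuous_on[OF lip]])
      (use eq \<open>X 0 = \<theta>\<close> in simp)
qed

lemma ode_sol_perturbation:
  fixes g h :: "'a::euclidean_space \<Rightarrow> 'a"
  assumes lip: "L-lipschitz_on UNIV g" and y: "ode_sol g y" and z: "ode_sol h z"
    and close: "\<And>t. t \<in> {0..T} \<Longrightarrow> norm (g (z t) - h (z t)) \<le> \<eta>"
    and "norm (y 0 - z 0) < c" "L + \<eta> / c < K" and t: "t \<in> {0..T}"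
  shows "norm (y t - z t) < c * exp (K * t)"
proof (rule gronwall_norm_less_exp[where d'="\<lambda>t. g (y t) - h (z t)"])
  fix s assume "s \<in> {0..T}"
  then show "((\<lambda>t. y t - z t) has_vector_derivative g (y s) - h (z s)) (at s within {0..T})"
    using y z unfolding ode_sol_def
    by (auto intro!: derivative_eq_intros elim!: has_vector_derivative_within_subset)
  have "norm (g (y s) - h (z s)) \<le> norm (g (y s) - g (z s)) + norm (g (z s) - h (z s))"
    by (rule order_trans[OF _ norm_triangle_ineq]) simp
  then show "norm (g (y s) - h (z s)) \<le> L * norm (y s - z s) + \<eta>"
    using lipschitz_on_normD[OF lip UNIV_I UNIV_I, of "y s" "z s"] close[OF \<open>s \<in> {0..T}\<close>] by linarith
next
  have "0 \<in> {0..T}"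
    using t by simp
  then show "0 \<le> \<eta>"
    using order_trans[OF norm_ge_zero close] by blast
qed (use assms lipschitz_on_nonneg[OF lip] in auto)

lemma ode_sol_vector_field_perturbation:
  fixes g F :: "'a::euclidean_space \<Rightarrow> 'a"
  assumes lipg: "L-lipschitz_on UNIV g" and lipF: "L-lipschitz_on UNIV F" and "F 0 = 0"
    and y: "ode_sol g y" and z: "ode_sol F z" and "y 0 = z 0" "norm (z 0) < \<rho>" "0 \<le> T"
    and close: "\<And>\<theta>. norm \<theta> \<le> \<rho> * exp ((L + 1) * T) \<Longrightarrow>
      norm (g \<theta> - F \<theta>) \<le> \<epsilon> * exp (- ((L + 1) * T)) / 2"
    and "0 < \<epsilon>"
  shows "norm (y T - z T) < \<epsilon>"
proof -
  have "0 \<le> L"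
    using lipF by (rule lipschitz_on_nonneg)
  have "0 < \<rho>"
    using \<open>norm (z 0) < \<rho>\<close> norm_ge_zero[of "z 0"] by linarith
  have "ode_sol F (\<lambda>_. 0)"
    using \<open>F 0 = 0\<close> by (simp add: ode_sol_def)
  have bounded: "norm (z t) \<le> \<rho> * exp ((L + 1) * T)" if "t \<in> {0..T}" for t
  proof -
    have "norm (z t - 0) < \<rho> * exp ((L + 1) * t)"
      using \<open>norm (z 0) < \<rho>\<close> that
      by (intro ode_sol_perturbation[OF lipF z \<open>ode_sol F (\<lambda>_. 0)\<close>, where \<eta>=0 and T=T]) auto
    also have "\<dots> \<le> \<rho> * exp ((L + 1) * T)"
      using that \<open>0 \<le> L\<close> \<open>0 < \<rho>\<close> by (auto intro: mult_left_mono)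
    finally show ?thesis
      by simp
  qed
  define c where "c = \<epsilon> * exp (- ((L + 1) * T))"
  have "0 < c"
    using \<open>0 < \<epsilon>\<close> by (simp add: c_def)
  have "norm (y T - z T) < c * exp ((L + 1) * T)"
  proof (rule ode_sol_perturbation[OF lipg y z, where \<eta>="c / 2"])
    show "norm (g (z t) - F (z t)) \<le> c / 2" if "t \<in> {0..T}" for t
      using close[OF bounded[OF that]] by (simp add: c_def)
  qed (use \<open>0 < c\<close> \<open>y 0 = z 0\<close> \<open>0 \<le> T\<close> in auto)
  also have "\<dots> = \<epsilon>"
    by (simp add: c_def exp_minus)
  finally show ?thesis .
qed

section \<open>Lyapunov functions with exponential decay\<close>

lemma ode_sol_comp_has_real_derivative:
  assumes x: "ode_sol f x" and "0 \<le> t" and V: "(V has_derivative V') (at (x t))"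
  shows "((\<lambda>t. V (x t)) has_real_derivative V' (f (x t))) (at t within {0..})"
proof -
  have "(x has_derivative (\<lambda>h. h *\<^sub>R f (x t))) (at t within {0..})"
    using x \<open>0 \<le> t\<close> unfolding ode_sol_def has_vector_derivative_def by blast
  from has_derivative_compose[OF this V]
  have "((\<lambda>t. V (x t)) has_derivative (\<lambda>h. V' (h *\<^sub>R f (x t)))) (at t within {0..})" .
  moreover have "(\<lambda>h. V' (h *\<^sub>R f (x t))) = (\<lambda>h. V' (f (x t)) * h)"
    using linear_scale[OF has_derivative_linear[OF V]] by (simp add: fun_eq_iff mult.commute)
  ultimately show ?thesis
    by (simp add: has_field_derivative_def)
qed

lemma lyapunov_exp_weighted_antimono:
  fixes V :: "'a::euclidean_space \<Rightarrow> real"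
  assumes V: "\<And>\<theta>. (V has_derivative V' \<theta>) (at \<theta>)"
    and decay: "\<And>t D. 0 \<le> t \<Longrightarrow> \<rho> \<le> norm (x t) \<Longrightarrow>
      ((\<lambda>t. V (x t)) has_real_derivative D) (at t within {0..}) \<Longrightarrow> D \<le> - \<delta> * V (x t)"
    and x: "ode_sol f x" and "0 \<le> a" "a \<le> b"
    and outside: "\<And>t. a < t \<Longrightarrow> t < b \<Longrightarrow> \<rho> \<le> norm (x t)"
  shows "exp (\<delta> * b) * V (x b) \<le> exp (\<delta> * a) * V (x a)"
proof (rule DERIV_nonpos_imp_decreasing_open[OF \<open>a \<le> b\<close>])
  fix t assume "a < t" "t < b"
  then have "0 < t"
    using \<open>0 \<le> a\<close> by simp
  let ?D = "V' (x t) (f (x t))"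
  have "((\<lambda>t. V (x t)) has_real_derivative ?D) (at t within {0..})"
    using \<open>0 < t\<close> by (intro ode_sol_comp_has_real_derivative[OF x _ V]) simp
  then have "?D \<le> - \<delta> * V (x t)"
    using \<open>0 < t\<close> outside[OF \<open>a < t\<close> \<open>t < b\<close>] by (intro decay) auto
  moreover have "at t within {0..} = at t"
    using \<open>0 < t\<close> by (intro at_within_interior) simp
  then have "((\<lambda>t. V (x t)) has_real_derivative ?D) (at t)"
    using \<open>((\<lambda>t. V (x t)) has_real_derivative ?D) (at t within {0..})\<close> by simp
  then have "((\<lambda>t. exp (\<delta> * t) * V (x t)) has_real_derivative
      exp (\<delta> * t) * (\<delta> * V (x t) + ?D)) (at t)"
    by (auto intro!: derivative_eq_intros simp: algebra_simps)
  ultimately show "\<exists>y. ((\<lambda>t. exp (\<delta> * t) * V (x t)) has_real_derivative y) (at t) \<and> y \<le> 0"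
    by (intro exI conjI) (auto simp: mult_nonneg_nonpos)
next
  have "continuous_on UNIV V"
    using V by (meson continuous_at_imp_continuous_on has_derivative_continuous)
  moreover have "continuous_on {a..b} x"
    by (rule continuous_on_subset[OF ode_sol_continuous_on[OF x]]) (use \<open>0 \<le> a\<close> in auto)
  ultimately have "continuous_on {a..b} (\<lambda>t. V (x t))"
    by (rule continuous_on_compose2) auto
  then show "continuous_on {a..b} (\<lambda>t. exp (\<delta> * t) * V (x t))"
    by (intro continuous_intros)
qed

lemma continuous_on_last_time_le:
  fixes u :: "real \<Rightarrow> real"
  assumes u: "continuous_on {a..b} u" and "s \<in> {a..b}" "u s \<le> \<rho>"
  obtains s' where "s' \<in> {a..b}" "u s' \<le> \<rho>" "\<And>t. s' < t \<Longrightarrow> t \<le> b \<Longrightarrow> \<rho> < u t"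
proof -
  define S where "S = {s \<in> {a..b}. u s \<le> \<rho>}"
  have "closed S"
    unfolding S_def by (intro continuous_on_closed_Collect_le u continuous_on_const) simp
  moreover have "s \<in> S" "bdd_above S"
    using assms by (auto simp: S_def intro: bdd_aboveI[of _ b])
  ultimately have "Sup S \<in> S"
    using closed_contains_Sup by blast
  show ?thesis
  proof (rule that)
    show "Sup S \<in> {a..b}" "u (Sup S) \<le> \<rho>"
      using \<open>Sup S \<in> S\<close> by (auto simp: S_def)
    fix t assume "Sup S < t" "t \<le> b"
    then have "t \<notin> S"
      using cSup_upper[OF _ \<open>bdd_above S\<close>, of t] by auto
    then show "\<rho> < u t"
      using \<open>Sup S \<in> S\<close> \<open>Sup S < t\<close> \<open>t \<le> b\<close> by (auto simp: S_def)
  qed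
qed

lemma lyapunov_step_bound:
  fixes V :: "'a::euclidean_space \<Rightarrow> real"
  assumes V: "\<And>\<theta>. (V has_derivative V' \<theta>) (at \<theta>)"
    and decay: "\<And>t D. 0 \<le> t \<Longrightarrow> \<rho> \<le> norm (x t) \<Longrightarrow>
      ((\<lambda>t. V (x t)) has_real_derivative D) (at t within {0..}) \<Longrightarrow> D \<le> - \<delta> * V (x t)"
    and x: "ode_sol f x" and "0 \<le> \<tau>" "0 \<le> h" "0 \<le> \<delta>"
    and nonneg: "\<And>\<theta>. 0 \<le> V \<theta>" and inside: "\<And>\<theta>. norm \<theta> \<le> \<rho> \<Longrightarrow> V \<theta> \<le> C"
  shows "V (x (\<tau> + h)) \<le> max (exp (- \<delta> * h) * V (x \<tau>)) C"
proof (cases "\<exists>s\<in>{\<tau>..\<tau> + h}. norm (x s) \<le> \<rho>")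
  case False
  have "\<rho> \<le> norm (x t)" if "\<tau> < t" "t < \<tau> + h" for t
  proof -
    from False that have "\<not> norm (x t) \<le> \<rho>"
      by auto
    then show ?thesis
      by simp
  qed
  then have "exp (\<delta> * (\<tau> + h)) * V (x (\<tau> + h)) \<le> exp (\<delta> * \<tau>) * V (x \<tau>)"
    using \<open>0 \<le> \<tau>\<close> \<open>0 \<le> h\<close> by (intro lyapunov_exp_weighted_antimono[OF V decay x]) auto
  then have "exp (\<delta> * \<tau>) * (exp (\<delta> * h) * V (x (\<tau> + h))) \<le> exp (\<delta> * \<tau>) * V (x \<tau>)"
    by (simp add: distrib_left exp_add mult.assoc)
  then have "exp (\<delta> * h) * V (x (\<tau> + h)) \<le> V (x \<tau>)"
    by simp
  then have "V (x (\<tau> + h)) \<le> exp (- \<delta> * h) * V (x \<tau>)"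
    by (simp add: exp_minus field_simps)
  then show ?thesis
    by simp
next
  case True
  have "continuous_on {\<tau>..\<tau> + h} (\<lambda>s. norm (x s))"
    by (intro continuous_on_norm continuous_on_subset[OF ode_sol_continuous_on[OF x]])
      (use \<open>0 \<le> \<tau>\<close> in auto)
  then obtain s where s: "s \<in> {\<tau>..\<tau> + h}" "norm (x s) \<le> \<rho>"
    and after: "\<And>t. s < t \<Longrightarrow> t \<le> \<tau> + h \<Longrightarrow> \<rho> < norm (x t)"
    using True continuous_on_last_time_le by metis
  have "exp (\<delta> * (\<tau> + h)) * V (x (\<tau> + h)) \<le> exp (\<delta> * s) * V (x s)"
    using s \<open>0 \<le> \<tau>\<close> after by (intro lyapunov_exp_weighted_antimono[OF V decay x]) (auto intro: less_imp_le)
  also have "\<dots> \<le> exp (\<delta> * (\<tau> + h)) * V (x s)"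
    using s \<open>0 \<le> \<delta>\<close> nonneg by (intro mult_right_mono) (auto intro: mult_left_mono)
  finally have "V (x (\<tau> + h)) \<le> V (x s)"
    by simp
  also have "\<dots> \<le> C"
    using s(2) by (rule inside)
  finally show ?thesis
    by simp
qed

lemma step_bound_imp_linear_decrease:
  fixes v v' n C \<delta> \<delta>1 :: real
  assumes step: "v' \<le> max (exp (- \<delta>) * v) C" and "0 \<le> n" "n \<le> v" and big: "1 < \<delta>1 * n"
    and "\<delta>1 \<le> 1 / 2" "\<delta>1 \<le> 1 - exp (- \<delta>)" "\<delta>1 * (2 * C) \<le> 1"
  shows "v' - v \<le> - \<delta>1 * n"
proof -
  have "0 < \<delta>1"
  proof (rule ccontr)
    assume "\<not> 0 < \<delta>1"
    then have "\<delta>1 * n \<le> 0"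
      using \<open>0 \<le> n\<close> by (simp add: mult_nonpos_nonneg)
    then show False
      using big by linarith
  qed
  have "\<delta>1 * n \<le> (1 - exp (- \<delta>)) * v"
    by (rule mult_mono) (use assms \<open>0 < \<delta>1\<close> in linarith)+
  then have "exp (- \<delta>) * v - v \<le> - \<delta>1 * n"
    by (simp add: algebra_simps)
  moreover have "\<delta>1 * (2 * C) < \<delta>1 * n"
    using big \<open>\<delta>1 * (2 * C) \<le> 1\<close> by linarith
  then have "C \<le> n / 2"
    using \<open>0 < \<delta>1\<close> by simp
  moreover have "\<delta>1 * n \<le> n / 2"
    using mult_right_mono[OF \<open>\<delta>1 \<le> 1 / 2\<close> \<open>0 \<le> n\<close>] by simp
  moreover have "v' \<le> exp (- \<delta>) * v \<or> v' \<le> C"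
    using step by (simp add: le_max_iff_disj)
  ultimately show ?thesis
    using \<open>n \<le> v\<close> by (elim disjE) linarith+
qed

lemma V4_imp_V4':
  assumes "V4 f"
  shows "V4' f"
proof -
  obtain V \<delta>0 LV where "C1_fun V" and V1: "\<And>\<theta>. 1 \<le> V \<theta>" and "0 < \<delta>0"
    and decay: "\<And>x \<tau> D. ode_sol f x \<Longrightarrow> 0 \<le> \<tau> \<Longrightarrow> 1 / \<delta>0 \<le> norm (x \<tau>) \<Longrightarrow>
        ((\<lambda>t. V (x t)) has_real_derivative D) (at \<tau> within {0..}) \<Longrightarrow> D \<le> - \<delta>0 * V (x \<tau>)"
    and lip: "\<And>\<theta> \<theta>'. \<bar>V \<theta>' - V \<theta>\<bar> \<le> LV * norm (\<theta>' - \<theta>)"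
    and V_ge: "\<And>\<theta>. 1 / \<delta>0 \<le> norm \<theta> \<Longrightarrow> norm \<theta> \<le> V \<theta>"
    using assms unfolding V4_def by blast
  obtain V' where V': "\<And>\<theta>. (V has_derivative blinfun_apply (V' \<theta>)) (at \<theta>)"
    using \<open>C1_fun V\<close> unfolding C1_fun_def by blast
  define C where "C = V 0 + \<bar>LV\<bar> / \<delta>0"
  have inside: "V \<theta> \<le> C" if "norm \<theta> \<le> 1 / \<delta>0" for \<theta>
    using lip[of 0 \<theta>] mult_mono[OF abs_ge_self that abs_ge_zero norm_ge_zero, of LV]
    by (simp add: C_def)
  have "1 \<le> C"
    using inside[of 0] V1[of 0] \<open>0 < \<delta>0\<close> by simp
  define \<delta>1 where "\<delta>1 = min (min (1 / 2) \<delta>0) (min (1 - exp (- \<delta>0)) (1 / (2 * C)))"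
  have "0 < \<delta>1"
    using \<open>0 < \<delta>0\<close> \<open>1 \<le> C\<close> by (simp add: \<delta>1_def)
  have \<delta>1: "\<delta>1 \<le> 1 / 2" "\<delta>1 \<le> \<delta>0" "\<delta>1 \<le> 1 - exp (- \<delta>0)" "\<delta>1 \<le> 1 / (2 * C)"
    unfolding \<delta>1_def min_def by auto
  have "\<delta>1 * (2 * C) \<le> 1"
    using \<delta>1(4) \<open>1 \<le> C\<close> by (simp add: field_simps)
  have decrease: "V (x (\<tau> + 1)) - V (x \<tau>) \<le> - \<delta>1 * norm (x \<tau>)"
    if x: "ode_sol f x" and "0 \<le> \<tau>" and big: "1 / \<delta>1 < norm (x \<tau>)" for x \<tau>
  proof (rule step_bound_imp_linear_decrease[OF _ norm_ge_zero _ _ \<delta>1(1,3) \<open>\<delta>1 * (2 * C) \<le> 1\<close>])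
    show "1 < \<delta>1 * norm (x \<tau>)"
      using big \<open>0 < \<delta>1\<close> by (simp add: field_simps)
    moreover have "\<delta>1 * norm (x \<tau>) \<le> \<delta>0 * norm (x \<tau>)"
      using \<delta>1(2) by (simp add: mult_right_mono)
    ultimately show "norm (x \<tau>) \<le> V (x \<tau>)"
      using \<open>0 < \<delta>0\<close> by (intro V_ge) (simp add: field_simps)
    show "V (x (\<tau> + 1)) \<le> max (exp (- \<delta>0) * V (x \<tau>)) C"
      using lyapunov_step_bound[OF V' decay[OF x] x \<open>0 \<le> \<tau>\<close> zero_le_one _ _ inside] V1 \<open>0 < \<delta>0\<close>
      by (auto intro: order_trans[OF zero_le_one])
  qed
  show ?thesis
    unfolding V4'_def
    by (intro exI[of _ V] exI[of _ LV] exI[of _ \<delta>0] exI[of _ \<delta>1] exI[of _ "1::real"])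
      (use V1 \<open>0 < \<delta>0\<close> \<open>0 < \<delta>1\<close> lip V_ge decrease in \<open>auto intro: order_trans[OF zero_le_one]\<close>)
qed

section \<open>The ODE at infinity\<close>

lemma lipschitz_on_rescaled:
  fixes f :: "'a::real_normed_vector \<Rightarrow> 'b::real_normed_vector"
  assumes "L-lipschitz_on UNIV f" "0 < r"
  shows "L-lipschitz_on UNIV (\<lambda>\<theta>. (1 / r) *\<^sub>R f (r *\<^sub>R \<theta>))"
proof (rule lipschitz_onI)
  fix x y :: 'a
  have "dist ((1 / r) *\<^sub>R f (r *\<^sub>R x)) ((1 / r) *\<^sub>R f (r *\<^sub>R y)) = dist (f (r *\<^sub>R x)) (f (r *\<^sub>R y)) / r"
    using \<open>0 < r\<close> by (simp add: dist_norm flip: scaleR_diff_right)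
  also have "\<dots> \<le> L * dist (r *\<^sub>R x) (r *\<^sub>R y) / r"
    using lipschitz_onD[OF assms(1)] \<open>0 < r\<close> by (simp add: divide_right_mono)
  also have "\<dots> = L * dist x y"
    using \<open>0 < r\<close> by (simp add: dist_norm flip: scaleR_diff_right)
  finally show "dist ((1 / r) *\<^sub>R f (r *\<^sub>R x)) ((1 / r) *\<^sub>R f (r *\<^sub>R y)) \<le> L * dist x y" .
qed (rule lipschitz_on_nonneg[OF assms(1)])

lemma lipschitz_on_tendsto:
  assumes "F \<noteq> bot" and lip: "eventually (\<lambda>r. L-lipschitz_on S (h r)) F"
    and lim: "\<And>\<theta>. \<theta> \<in> S \<Longrightarrow> ((\<lambda>r. h r \<theta>) \<longlongrightarrow> G \<theta>) F"
  shows "L-lipschitz_on S G"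
proof (rule lipschitz_onI)
  fix x y assume "x \<in> S" "y \<in> S"
  show "dist (G x) (G y) \<le> L * dist x y"
  proof (rule tendsto_le[OF \<open>F \<noteq> bot\<close>])
    show "((\<lambda>r. dist (h r x) (h r y)) \<longlongrightarrow> dist (G x) (G y)) F"
      using \<open>x \<in> S\<close> \<open>y \<in> S\<close> by (intro tendsto_intros lim)
    show "eventually (\<lambda>r. dist (h r x) (h r y) \<le> L * dist x y) F"
      using lip by eventually_elim (use \<open>x \<in> S\<close> \<open>y \<in> S\<close> in \<open>auto dest: lipschitz_onD\<close>)
  qed simp
next
  show "0 \<le> L"
    using eventually_happens'[OF \<open>F \<noteq> bot\<close> lip] lipschitz_on_nonneg by blast
qed

lemma lipschitz_on_dist_le:
  assumes f: "L-lipschitz_on S f" and g: "L-lipschitz_on S g" and "x \<in> S" "y \<in> S"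
  shows "dist (f x) (g x) \<le> dist (f y) (g y) + 2 * L * dist x y"
proof -
  have "dist (f x) (g x) \<le> dist (f x) (f y) + dist (f y) (g y) + dist (g y) (g x)"
    using dist_triangle[of "f x" "g x" "f y"] dist_triangle[of "f y" "g x" "g y"] by linarith
  moreover have "dist (f x) (f y) \<le> L * dist x y" "dist (g y) (g x) \<le> L * dist x y"
    using lipschitz_onD[OF f \<open>x \<in> S\<close> \<open>y \<in> S\<close>] lipschitz_onD[OF g \<open>y \<in> S\<close> \<open>x \<in> S\<close>]
    by (simp_all add: dist_commute)
  ultimately show ?thesis
    by linarith
qed

lemma uniform_limit_equi_lipschitz:
  assumes "compact S" and lip: "eventually (\<lambda>r. L-lipschitz_on S (h r)) F"
    and lim: "\<And>\<theta>. \<theta> \<in> S \<Longrightarrow> ((\<lambda>r. h r \<theta>) \<longlongrightarrow> G \<theta>) F"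
  shows "uniform_limit S h G F"
proof (cases "F = bot")
  case False
  have G: "L-lipschitz_on S G"
    using False lip lim by (rule lipschitz_on_tendsto)
  then have "0 \<le> L"
    by (rule lipschitz_on_nonneg)
  show ?thesis
  proof (rule uniform_limitI)
    fix e :: real assume "0 < e"
    define \<rho> where "\<rho> = e / (3 * (L + 1))"
    have "0 < \<rho>" "L * \<rho> \<le> e / 3"
      using \<open>0 < e\<close> \<open>0 \<le> L\<close> by (auto simp: \<rho>_def field_simps)
    obtain P where P: "finite P" "P \<subseteq> S" "S \<subseteq> (\<Union>p\<in>P. ball p \<rho>)"
      using seq_compact_imp_totally_bounded[OF compact_imp_seq_compact[OF \<open>compact S\<close>]] \<open>0 < \<rho>\<close>
      by meson
    have "eventually (\<lambda>r. dist (h r p) (G p) < e / 3) F" if "p \<in> P" for p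
      using tendsto_iff[THEN iffD1, OF lim] P(2) that \<open>0 < e\<close> by (meson subsetD zero_less_divide_iff zero_less_numeral)
    then have "eventually (\<lambda>r. \<forall>p\<in>P. dist (h r p) (G p) < e / 3) F"
      using P(1) by (intro eventually_ball_finite) auto
    with lip show "eventually (\<lambda>r. \<forall>\<theta>\<in>S. dist (h r \<theta>) (G \<theta>) < e) F"
    proof eventually_elim
      case (elim r)
      show ?case
      proof
        fix \<theta> assume "\<theta> \<in> S"
        then obtain p where "p \<in> P" "dist p \<theta> < \<rho>"
          using P(3) by auto
        then have "p \<in> S"
          using P(2) by auto
        have "dist (h r \<theta>) (G \<theta>) \<le> dist (h r p) (G p) + 2 * L * dist \<theta> p"
          using elim(1) G \<open>\<theta> \<in> S\<close> \<open>p \<in> S\<close> by (rule lipschitz_on_dist_le)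
        also have "\<dots> < e / 3 + 2 * L * \<rho>"
          using elim(2) \<open>p \<in> P\<close> mult_left_mono[OF less_imp_le[OF \<open>dist p \<theta> < \<rho>\<close>], of "2 * L"]
            \<open>0 \<le> L\<close> dist_commute[of \<theta> p] by fastforce
        also have "\<dots> \<le> e"
          using \<open>L * \<rho> \<le> e / 3\<close> by linarith
        finally show "dist (h r \<theta>) (G \<theta>) < e" .
      qed
    qed
  qed
qed (simp add: uniform_limit_iff)

lemma rescaling_limit_homogeneous:
  fixes f F :: "'a::real_normed_vector \<Rightarrow> 'b::real_normed_vector"
  assumes lim: "\<And>\<theta>. ((\<lambda>r. (1 / r) *\<^sub>R f (r *\<^sub>R \<theta>)) \<longlongrightarrow> F \<theta>) at_top" and "0 < c"
  shows "F (c *\<^sub>R \<theta>) = c *\<^sub>R F \<theta>"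
proof -
  have "filterlim (\<lambda>r. c * r) at_top at_top"
    using \<open>0 < c\<close> by (intro filterlim_tendsto_pos_mult_at_top[OF tendsto_const] filterlim_ident)
  then have "((\<lambda>r. (1 / (c * r)) *\<^sub>R f ((c * r) *\<^sub>R \<theta>)) \<longlongrightarrow> F \<theta>) at_top"
    by (rule filterlim_compose[OF lim])
  from tendsto_scaleR[OF tendsto_const[of c] this] have "((\<lambda>r. c *\<^sub>R ((1 / (c * r)) *\<^sub>R f ((c * r) *\<^sub>R \<theta>))) \<longlongrightarrow> c *\<^sub>R F \<theta>) at_top"
    .
  moreover have "eventually (\<lambda>r. c *\<^sub>R ((1 / (c * r)) *\<^sub>R f ((c * r) *\<^sub>R \<theta>))
      = (1 / r) *\<^sub>R f (r *\<^sub>R (c *\<^sub>R \<theta>))) at_top"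
    using eventually_gt_at_top[of 0] by eventually_elim (use \<open>0 < c\<close> in \<open>simp add: mult.commute\<close>)
  ultimately have "((\<lambda>r. (1 / r) *\<^sub>R f (r *\<^sub>R (c *\<^sub>R \<theta>))) \<longlongrightarrow> c *\<^sub>R F \<theta>) at_top"
    by (rule Lim_transform_eventually)
  then show ?thesis
    using lim tendsto_unique[OF trivial_limit_at_top_linorder] by blast
qed

lemma rescaling_limit_lipschitz:
  fixes f F :: "'a::real_normed_vector \<Rightarrow> 'b::real_normed_vector"
  assumes lip: "L-lipschitz_on UNIV f"
    and lim: "\<And>\<theta>. ((\<lambda>r. (1 / r) *\<^sub>R f (r *\<^sub>R \<theta>)) \<longlongrightarrow> F \<theta>) at_top"
  shows "L-lipschitz_on UNIV F"
proof (rule lipschitz_on_tendsto[OF trivial_limit_at_top_linorder _ lim])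
  show "eventually (\<lambda>r. L-lipschitz_on UNIV (\<lambda>\<theta>. (1 / r) *\<^sub>R f (r *\<^sub>R \<theta>))) at_top"
    using eventually_gt_at_top[of 0] by eventually_elim (rule lipschitz_on_rescaled[OF lip])
qed

lemma rescaling_limit_uniform_on_cball:
  fixes f F :: "'a::euclidean_space \<Rightarrow> 'a"
  assumes lip: "L-lipschitz_on UNIV f"
    and lim: "\<And>\<theta>. ((\<lambda>r. (1 / r) *\<^sub>R f (r *\<^sub>R \<theta>)) \<longlongrightarrow> F \<theta>) at_top" and "0 < \<eta>"
  obtains R where "0 < R"
    "\<And>r \<theta>. R \<le> r \<Longrightarrow> norm \<theta> \<le> B \<Longrightarrow> norm ((1 / r) *\<^sub>R f (r *\<^sub>R \<theta>) - F \<theta>) \<le> \<eta>"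
proof -
  have "uniform_limit (cball 0 B) (\<lambda>r \<theta>. (1 / r) *\<^sub>R f (r *\<^sub>R \<theta>)) F at_top"
    by (intro uniform_limit_equi_lipschitz[OF compact_cball, where L=L] lim
        eventually_mono[OF eventually_gt_at_top[of 0]] lipschitz_on_subset[OF lipschitz_on_rescaled[OF lip]])
      auto
  then have "eventually (\<lambda>r. \<forall>\<theta>\<in>cball (0::'a) B. dist ((1 / r) *\<^sub>R f (r *\<^sub>R \<theta>)) (F \<theta>) < \<eta>) at_top"
    using \<open>0 < \<eta>\<close> by (rule uniform_limitD)
  then obtain N where N: "\<forall>r\<ge>N. \<forall>\<theta>\<in>cball (0::'a) B. dist ((1 / r) *\<^sub>R f (r *\<^sub>R \<theta>)) (F \<theta>) < \<eta>"
    unfolding eventually_at_top_linorder by blast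
  show ?thesis
  proof (rule that[of "max N 1"])
    fix r and \<theta> :: 'a assume "max N 1 \<le> r" "norm \<theta> \<le> B"
    then show "norm ((1 / r) *\<^sub>R f (r *\<^sub>R \<theta>) - F \<theta>) \<le> \<eta>"
      using N[rule_format, of r \<theta>] by (simp add: dist_norm)
  qed simp
qed

lemma ode_sol_homogeneous_tendsto_0:
  assumes stab: "origin_asymp_stable F" and hom: "\<And>c v. 0 < c \<Longrightarrow> F (c *\<^sub>R v) = c *\<^sub>R F v"
    and z: "ode_sol F z"
  shows "(z \<longlongrightarrow> 0) at_top"
proof -
  obtain \<delta> where "0 < \<delta>" and attract: "\<And>x. ode_sol F x \<Longrightarrow> norm (x 0) < \<delta> \<Longrightarrow> (x \<longlongrightarrow> 0) at_top"
    using stab unfolding origin_asymp_stable_def by blast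
  define c where "c = \<delta> / (norm (z 0) + 1)"
  have "0 < norm (z 0) + 1"
    by (simp add: add_nonneg_pos)
  have "0 < c"
    unfolding c_def using \<open>0 < \<delta>\<close> by (intro divide_pos_pos) (auto intro: add_nonneg_pos)
  have "c *\<^sub>R F (\<theta> /\<^sub>R c) = F \<theta>" for \<theta>
    using hom[OF \<open>0 < c\<close>, of "\<theta> /\<^sub>R c"] \<open>0 < c\<close> by simp
  then have "(\<lambda>\<theta>. c *\<^sub>R F (\<theta> /\<^sub>R c)) = F"
    by blast
  then have "ode_sol F (\<lambda>t. c *\<^sub>R z t)"
    using ode_sol_scaleR[OF z, of c] \<open>0 < c\<close> by simp
  moreover have "norm (c *\<^sub>R z 0) < \<delta>"
    using \<open>0 < norm (z 0) + 1\<close> \<open>0 < \<delta>\<close> by (simp add: c_def field_simps)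
  ultimately have "((\<lambda>t. c *\<^sub>R z t) \<longlongrightarrow> 0) at_top"
    by (rule attract)
  then have "((\<lambda>t. (1 / c) *\<^sub>R (c *\<^sub>R z t)) \<longlongrightarrow> (1 / c) *\<^sub>R 0) at_top"
    by (intro tendsto_intros)
  then show ?thesis
    using \<open>0 < c\<close> by simp
qed

lemma ode_sol_enters_ball:
  fixes F :: "'a::euclidean_space \<Rightarrow> 'a"
  assumes lip: "L-lipschitz_on UNIV F" and attract: "\<And>z. ode_sol F z \<Longrightarrow> (z \<longlongrightarrow> 0) at_top"
    and "0 < r"
  obtains z t where "ode_sol F z" "z 0 = \<theta>" "0 \<le> t" "norm (z t) < r"
proof -
  obtain z where z: "z 0 = \<theta>" "ode_sol F z"
    using lipschitz_ode_sol_exists[OF lip] by blast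
  have "eventually (\<lambda>t. norm (z t) < r) at_top"
    using tendsto_iff[THEN iffD1, OF attract[OF z(2)], rule_format, OF \<open>0 < r\<close>] by simp
  then obtain t where "0 \<le> t" "norm (z t) < r"
    by (metis eventually_at_top_linorder max.cobounded1 max.cobounded2)
  with z show ?thesis
    using that by blast
qed

lemma uniform_attraction_time:
  fixes F :: "'a::euclidean_space \<Rightarrow> 'a"
  assumes lip: "L-lipschitz_on UNIV F"
    and stable: "\<exists>\<delta>>0. \<forall>x. ode_sol F x \<and> norm (x 0) < \<delta> \<longrightarrow> (\<forall>t\<ge>0. norm (x t) < \<epsilon>)"
    and attract: "\<And>z. ode_sol F z \<Longrightarrow> (z \<longlongrightarrow> 0) at_top"
  shows "\<exists>T>0. \<forall>z. ode_sol F z \<and> norm (z 0) \<le> \<rho> \<longrightarrow> (\<forall>t\<ge>T. norm (z t) < \<epsilon>)"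
proof -
  obtain \<delta> where "0 < \<delta>" and small: "\<And>x t. ode_sol F x \<Longrightarrow> norm (x 0) < \<delta> \<Longrightarrow> 0 \<le> t \<Longrightarrow> norm (x t) < \<epsilon>"
    using stable by blast
  have "\<exists>t z. 0 \<le> t \<and> ode_sol F z \<and> z 0 = \<theta> \<and> norm (z t) < \<delta> / 2" for \<theta>
    using ode_sol_enters_ball[OF lip attract half_gt_zero[OF \<open>0 < \<delta>\<close>]] by blast
  then obtain tt zz where tt: "\<And>\<theta>. 0 \<le> tt \<theta>" and zz: "\<And>\<theta>. ode_sol F (zz \<theta>)" "\<And>\<theta>. zz \<theta> 0 = \<theta>"
    and zz_small: "\<And>\<theta>. norm (zz \<theta> (tt \<theta>)) < \<delta> / 2"
    by metis
  \<comment> \<open>Solutions starting close to \<open>\<theta>\<close> stay within \<open>\<delta>/2\<close> of \<open>zz \<theta>\<close> up to time \<open>tt \<theta>\<close>.\<close>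
  define rad where "rad \<theta> = \<delta> / 2 * exp (- ((L + 1) * tt \<theta>))" for \<theta>
  have "0 < rad \<theta>" for \<theta>
    using \<open>0 < \<delta>\<close> by (simp add: rad_def)
  then have "cball 0 \<rho> \<subseteq> (\<Union>\<theta>\<in>cball 0 \<rho>. ball \<theta> (rad \<theta>))"
    by (meson UN_I centre_in_ball subsetI)
  then obtain Q where Q: "Q \<subseteq> cball 0 \<rho>" "finite Q" "cball 0 \<rho> \<subseteq> (\<Union>\<theta>\<in>Q. ball \<theta> (rad \<theta>))"
    by (rule compactE_image[OF compact_cball open_ball])
  define T where "T = Max (insert 1 (tt ` Q))"
  have "0 < T" "\<And>q. q \<in> Q \<Longrightarrow> tt q \<le> T"
    using Q(2) by (auto simp: T_def intro: Max_ge order.strict_trans2[OF zero_less_one])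
  have "norm (z t) < \<epsilon>" if z: "ode_sol F z" "norm (z 0) \<le> \<rho>" and "T \<le> t" for z t
  proof -
    obtain q where "q \<in> Q" "norm (z 0 - zz q 0) < rad q"
      using Q(3) z(2) zz(2) by (force simp: dist_norm norm_minus_commute)
    then have "norm (z (tt q) - zz q (tt q)) < rad q * exp ((L + 1) * tt q)"
      using tt[of q] by (intro ode_sol_perturbation[OF lip z(1) zz(1), where \<eta>=0 and T="tt q"]) auto
    also have "\<dots> = \<delta> / 2"
      by (simp add: rad_def exp_minus)
    finally have "norm (z (tt q)) < \<delta>"
      using zz_small[of q] norm_triangle_sub[of "z (tt q)" "zz q (tt q)"] by linarith
    moreover have "tt q \<le> t"
      using \<open>q \<in> Q\<close> \<open>T \<le> t\<close> \<open>\<And>q. q \<in> Q \<Longrightarrow> tt q \<le> T\<close> by force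
    ultimately show ?thesis
      using small[OF ode_sol_shift[OF z(1) tt[of q]], of "t - tt q"] by simp
  qed
  with \<open>0 < T\<close> show ?thesis
    by blast
qed

lemma ode_sol_near_attracting_field:
  fixes g F :: "'a::euclidean_space \<Rightarrow> 'a"
  assumes lipg: "L-lipschitz_on UNIV g" and lipF: "L-lipschitz_on UNIV F" and "F 0 = 0" "0 \<le> T"
    and attracted: "\<And>z. ode_sol F z \<Longrightarrow> norm (z 0) \<le> 1 \<Longrightarrow> norm (z T) < 1 / 4"
    and close: "\<And>\<theta>. norm \<theta> \<le> 2 * exp ((L + 1) * T) \<Longrightarrow>
      norm (g \<theta> - F \<theta>) \<le> 1 / 4 * exp (- ((L + 1) * T)) / 2"
    and y: "ode_sol g y" and "norm (y 0) \<le> 1"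
  shows "norm (y T) < 1 / 2"
proof -
  obtain z where z: "z 0 = y 0" "ode_sol F z"
    using lipschitz_ode_sol_exists[OF lipF] by blast
  have "norm (y T - z T) < 1 / 4"
    by (rule ode_sol_vector_field_perturbation[OF lipg lipF \<open>F 0 = 0\<close> y z(2) _ _ \<open>0 \<le> T\<close> close])
      (use z \<open>norm (y 0) \<le> 1\<close> in auto)
  moreover have "norm (z T) < 1 / 4"
    using attracted[OF z(2)] z(1) \<open>norm (y 0) \<le> 1\<close> by simp
  ultimately show ?thesis
    using norm_triangle_sub[of "y T" "z T"] by linarith
qed

lemma halving_time_at_infinity:
  fixes f F :: "'a::euclidean_space \<Rightarrow> 'a"
  assumes lip: "L-lipschitz_on UNIV f"
    and lim: "\<And>\<theta>. ((\<lambda>r. (1 / r) *\<^sub>R f (r *\<^sub>R \<theta>)) \<longlongrightarrow> F \<theta>) at_top"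
    and stab: "origin_asymp_stable F"
  shows "\<exists>R T. 0 < T \<and>
    (\<forall>x \<tau>. ode_sol f x \<and> 0 \<le> \<tau> \<and> R \<le> norm (x \<tau>) \<longrightarrow> norm (x (\<tau> + T)) \<le> norm (x \<tau>) / 2)"
proof -
  define h where "h r \<theta> = (1 / r) *\<^sub>R f (r *\<^sub>R \<theta>)" for r \<theta>
  have lip_h: "L-lipschitz_on UNIV (h r)" if "0 < r" for r
    unfolding h_def using lip that by (rule lipschitz_on_rescaled)
  have lipF: "L-lipschitz_on UNIV F"
    using lip lim by (rule rescaling_limit_lipschitz)
  have hom: "F (c *\<^sub>R v) = c *\<^sub>R F v" if "0 < c" for c v
    using lim that by (rule rescaling_limit_homogeneous)
  have "F 0 = 0"
    using hom[of 2 0] by (simp add: scaleR_2)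
  obtain T where "0 < T"
    and attracted: "\<And>z t. ode_sol F z \<Longrightarrow> norm (z 0) \<le> 1 \<Longrightarrow> T \<le> t \<Longrightarrow> norm (z t) < 1 / 4"
    using uniform_attraction_time[OF lipF _ ode_sol_homogeneous_tendsto_0[OF stab hom], of "1 / 4" 1]
      stab unfolding origin_asymp_stable_def by (metis divide_pos_pos zero_less_numeral zero_less_one)
  have "0 < 1 / 4 * exp (- ((L + 1) * T)) / 2"
    by simp
  then obtain R where "0 < R" and R: "\<And>r \<theta>. R \<le> r \<Longrightarrow> norm \<theta> \<le> 2 * exp ((L + 1) * T) \<Longrightarrow>
      norm (h r \<theta> - F \<theta>) \<le> 1 / 4 * exp (- ((L + 1) * T)) / 2"
    unfolding h_def by (rule rescaling_limit_uniform_on_cball[OF lip lim]) blast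
  have "norm (x (\<tau> + T)) \<le> norm (x \<tau>) / 2"
    if x: "ode_sol f x" and "0 \<le> \<tau>" and "R \<le> norm (x \<tau>)" for x \<tau>
  proof -
    define r where "r = norm (x \<tau>)"
    have "0 < r"
      unfolding r_def using \<open>0 < R\<close> \<open>R \<le> norm (x \<tau>)\<close> by linarith
    define y where "y t = (1 / r) *\<^sub>R x (\<tau> + t)" for t
    have "ode_sol (h r) y"
      unfolding y_def h_def[abs_def] using x \<open>0 \<le> \<tau>\<close> \<open>0 < r\<close> by (rule ode_sol_rescaled)
    moreover have "norm (y 0) = 1"
      using \<open>0 < r\<close> by (simp add: y_def r_def)
    ultimately have "norm (y T) < 1 / 2"
      using R[of r] \<open>R \<le> norm (x \<tau>)\<close> \<open>0 < T\<close> attracted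
      by (intro ode_sol_near_attracting_field[OF lip_h[OF \<open>0 < r\<close>] lipF \<open>F 0 = 0\<close>])
        (auto simp: r_def)
    moreover have "x (\<tau> + T) = r *\<^sub>R y T"
      using \<open>0 < r\<close> by (simp add: y_def)
    ultimately show ?thesis
      using \<open>0 < r\<close> by (simp add: r_def)
  qed
  with \<open>0 < T\<close> show ?thesis
    by blast
qed

lemma V4'_if_halving_time:
  assumes "0 < T"
    and halving: "\<And>x \<tau>. ode_sol f x \<Longrightarrow> 0 \<le> \<tau> \<Longrightarrow> R \<le> norm (x \<tau>) \<Longrightarrow>
      norm (x (\<tau> + T)) \<le> norm (x \<tau>) / 2"
  shows "V4' f"
proof -
  define \<delta>1 :: real where "\<delta>1 = 1 / max R 2"
  have "0 < \<delta>1" "\<delta>1 \<le> 1 / 2"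
    by (simp_all add: \<delta>1_def)
  have decrease: "norm (x (\<tau> + T)) - norm (x \<tau>) \<le> - \<delta>1 * norm (x \<tau>)"
    if "ode_sol f x" "0 \<le> \<tau>" "1 / \<delta>1 < norm (x \<tau>)" for x \<tau>
  proof -
    have "norm (x (\<tau> + T)) \<le> norm (x \<tau>) / 2"
      using that by (intro halving) (auto simp: \<delta>1_def)
    then show ?thesis
      using mult_right_mono[OF \<open>\<delta>1 \<le> 1 / 2\<close> norm_ge_zero[of "x \<tau>"]] by linarith
  qed
  show ?thesis
    unfolding V4'_def
    by (intro exI[of _ norm] exI[of _ "1::real"] exI[of _ "1::real"] exI[of _ \<delta>1] exI[of _ T])
      (use \<open>0 < T\<close> \<open>0 < \<delta>1\<close> norm_triangle_ineq3 decrease in auto)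
qed

lemma V4'_if_ODE_at_infinity_asymp_stable:
  fixes f F :: "'a::euclidean_space \<Rightarrow> 'a"
  assumes "L-lipschitz_on UNIV f"
    and "\<And>\<theta>. ((\<lambda>r. (1 / r) *\<^sub>R f (r *\<^sub>R \<theta>)) \<longlongrightarrow> F \<theta>) at_top"
    and "origin_asymp_stable F"
  shows "V4' f"
  using halving_time_at_infinity[OF assms] V4'_if_halving_time by blast

theorem propositionA9:
  fixes fbar :: "'a::euclidean_space \<Rightarrow> 'a"
  assumes "\<exists>L. L-lipschitz_on UNIV fbar"
  shows "(V4 fbar \<longrightarrow> V4' fbar) \<and>
         ((\<forall>\<theta>. \<exists>l. ((\<lambda>r. (1 / r) *\<^sub>R fbar (r *\<^sub>R \<theta>)) \<longlongrightarrow> l) at_top) \<and>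
          origin_asymp_stable (f_infty fbar) \<longrightarrow> V4' fbar)"
proof (intro conjI impI)
  show "V4' fbar" if "V4 fbar"
    using that by (rule V4_imp_V4')
next
  assume limits: "(\<forall>\<theta>. \<exists>l. ((\<lambda>r. (1 / r) *\<^sub>R fbar (r *\<^sub>R \<theta>)) \<longlongrightarrow> l) at_top) \<and>
    origin_asymp_stable (f_infty fbar)"
  obtain L where "L-lipschitz_on UNIV fbar"
    using assms by blast
  moreover have "((\<lambda>r. (1 / r) *\<^sub>R fbar (r *\<^sub>R \<theta>)) \<longlongrightarrow> f_infty fbar \<theta>) at_top" for \<theta>
    using limits tendsto_Lim[OF trivial_limit_at_top_linorder] unfolding f_infty_def by blast
  ultimately show "V4' fbar"
    using limits by (blast intro: V4'_if_ODE_at_infinity_asymp_stable)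
qed

end
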